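(* $\mathbf S(\mathbf{pAND}\cup\mathbf{11tAND}\cup\mathbf{11pOR}\cup\mathbf{tOR})=\mathbf S(\mathbf{pAND}\cup\mathbf{11pOR}\cup\mathbf{tOR})$.
   Context: Petri nets: $(P,T,F)$ with finite disjoint places $P$, transitions $T$, flow edges $F\subseteq(P\times T)\cup(T\times P)$; $\bullet x=\{y\mid(y,x)\in F\}$, $x\bullet=\{y\mid(x,y)\in F\}$. Workflow nets. A pWF net is $(P,T,F,I,O)$ with $(P,T,F)$ a Petri net, $I,O\subseteq P$ non-empty, every node reachable by a directed path from some node of $I$, and some node of $O$ reachable from every node. A tWF net is the same with $I,O$ non-empty subsets of $T$. Input nodes may have incoming edges and output nodes outgoing edges. A WF net is a pWF or tWF net; it is one-input (one-output) if $|I|=1$ ($|O|=1$). Substitution. Let $N=(P,T,F,I,O)$ and $M=(P',T',F',I',O')$ be WF nets with disjoint node sets. If $p\in P$ and $M$ is a pWF net, $N\otimes_p M$ is obtained from $N$ by deleting $p$ and all edges incident to $p$, adding all nodes and edges of $M$, adding an edge $(t,p')$ for each $t\in\bullet_N p$ and each $p'\in I'$, and an edge $(p',t)$ for each $p'\in O'$ and each $t\in p\bullet_N$; its input set is $(I\setminus\{p\})\cup I'$ if $p\in I$ and $I$ otherwise, and its output set is $(O\setminus\{p\})\cup O'$ if $p\in O$ and $O$ otherwise. If $t\in T$ and $M$ is a tWF net, $N\otimes_t M$ is defined analogously: delete $t$ and its edges, add $M$, add $(q,t')$ for each $q\in\bullet_N t$, $t'\in I'$, and $(t',q)$ for each $t'\in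 O'$, $q\in t\bullet_N$, with input/output sets updated in the same way. The substitution closure $\mathbf S(C)$ of a class $C$ of WF nets is the smallest superclass of $C$ such that whenever $N,M\in\mathbf S(C)$ are disjoint, $N\otimes_p M\in\mathbf S(C)$ for every place $p$ of $N$ if $M$ is a pWF net, and $N\otimes_t M\in\mathbf S(C)$ for every transition $t$ of $N$ if $M$ is a tWF net. AND and OR nets. An AND net is an acyclic WF net $(P,T,F,I,O)$ such that for every place $p$: (1) either $p\in I$ and $|\bullet p|=0$, or $p\notin I$ and $|\bullet p|=1$; and (2) either $p\in O$ and $|p\bullet|=0$, or $p\notin O$ and $|p\bullet|=1$. An OR net is a (possibly cyclic) WF net such that for every transition $t$: (1) either $t\in I$ and $|\bullet t|=0$, or $t\notin I$ and $|\bullet t|=1$; and (2) either $t\in O$ and $|t\bullet|=0$, or $t\notin O$ and $|t\bullet|=1$. A pAND (tAND, pOR, tOR) net is an AND (AND, OR, OR) net that is a pWF (tWF, pWF, tWF) net. $\mathbf{pAND}$ is the class of pAND nets, $\mathbf{11tAND}$ the class of one-input one-output tAND nets, $\mathbf{11pOR}$ the class of one-input one-output pOR nets, and $\mathbf{tOR}$ the class of tOR nets. *)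

theory Defs
  imports Main
begin

record 'a wfn =
  places :: "'a set"
  trans  :: "'a set"
  flow   :: "('a \<times> 'a) set"
  inp    :: "'a set"
  outp   :: "'a set"

definition nodes :: "'a wfn \<Rightarrow> 'a set" where
  "nodes N = places N \<union> trans N"

definition preset :: "'a wfn \<Rightarrow> 'a \<Rightarrow> 'a set" where
  "preset N x = {y. (y, x) \<in> flow N}"

definition postset :: "'a wfn \<Rightarrow> 'a \<Rightarrow> 'a set" where
  "postset N x = {y. (x, y) \<in> flow N}"

definition petri_net :: "'a wfn \<Rightarrow> bool" where
  "petri_net N \<longleftrightarrow> finite (places N) \<and> finite (trans N) \<and>
     places N \<inter> trans N = {} \<and>
     flow N \<subseteq> (places N \<times> trans N) \<union> (trans N \<times> places N)"

definition wf_conn :: "'a wfn \<Rightarrow> bool" where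
  "wf_conn N \<longleftrightarrow>
     (\<forall>x\<in>nodes N. \<exists>i\<in>inp N. (i, x) \<in> (flow N)\<^sup>*) \<and>
     (\<forall>x\<in>nodes N. \<exists>q\<in>outp N. (x, q) \<in> (flow N)\<^sup>*)"

definition pWF :: "'a wfn \<Rightarrow> bool" where
  "pWF N \<longleftrightarrow> petri_net N \<and> inp N \<noteq> {} \<and> outp N \<noteq> {} \<and>
     inp N \<subseteq> places N \<and> outp N \<subseteq> places N \<and> wf_conn N"

definition tWF :: "'a wfn \<Rightarrow> bool" where
  "tWF N \<longleftrightarrow> petri_net N \<and> inp N \<noteq> {} \<and> outp N \<noteq> {} \<and>
     inp N \<subseteq> trans N \<and> outp N \<subseteq> trans N \<and> wf_conn N"

definition WF :: "'a wfn \<Rightarrow> bool" where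
  "WF N \<longleftrightarrow> pWF N \<or> tWF N"

definition AND_net :: "'a wfn \<Rightarrow> bool" where
  "AND_net N \<longleftrightarrow> WF N \<and> acyclic (flow N) \<and>
     (\<forall>p\<in>places N.
        ((p \<in> inp N \<and> card (preset N p) = 0) \<or> (p \<notin> inp N \<and> card (preset N p) = 1)) \<and>
        ((p \<in> outp N \<and> card (postset N p) = 0) \<or> (p \<notin> outp N \<and> card (postset N p) = 1)))"

definition OR_net :: "'a wfn \<Rightarrow> bool" where
  "OR_net N \<longleftrightarrow> WF N \<and>
     (\<forall>t\<in>trans N.
        ((t \<in> inp N \<and> card (preset N t) = 0) \<or> (t \<notin> inp N \<and> card (preset N t) = 1)) \<and>
        ((t \<in> outp N \<and> card (postset N t) = 0) \<or> (t \<notin> outp N \<and> card (postset N t) = 1)))"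

definition pAND :: "'a wfn set" where
  "pAND = {N. AND_net N \<and> pWF N}"

definition tAND11 :: "'a wfn set" where
  "tAND11 = {N. AND_net N \<and> tWF N \<and> card (inp N) = 1 \<and> card (outp N) = 1}"

definition pOR11 :: "'a wfn set" where
  "pOR11 = {N. OR_net N \<and> pWF N \<and> card (inp N) = 1 \<and> card (outp N) = 1}"

definition tOR :: "'a wfn set" where
  "tOR = {N. OR_net N \<and> tWF N}"

definition subst :: "'a wfn \<Rightarrow> 'a \<Rightarrow> 'a wfn \<Rightarrow> 'a wfn" where
  "subst N x M = \<lparr>
     places = (places N - {x}) \<union> places M,
     trans  = (trans N - {x}) \<union> trans M,
     flow   = {e \<in> flow N. fst e \<noteq> x \<and> snd e \<noteq> x} \<union> flow M
              \<union> {(u, v). u \<in> preset N x \<and> v \<in> inp M}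
              \<union> {(u, v). u \<in> outp M \<and> v \<in> postset N x},
     inp    = (if x \<in> inp N then (inp N - {x}) \<union> inp M else inp N),
     outp   = (if x \<in> outp N then (outp N - {x}) \<union> outp M else outp N) \<rparr>"

inductive_set sclosure :: "'a wfn set \<Rightarrow> 'a wfn set" for C :: "'a wfn set" where
  base: "N \<in> C \<Longrightarrow> N \<in> sclosure C"
| place: "\<lbrakk>N \<in> sclosure C; M \<in> sclosure C; nodes N \<inter> nodes M = {};
           p \<in> places N; pWF M\<rbrakk> \<Longrightarrow> subst N p M \<in> sclosure C"
| transition: "\<lbrakk>N \<in> sclosure C; M \<in> sclosure C; nodes N \<inter> nodes M = {};
           t \<in> trans N; tWF M\<rbrakk> \<Longrightarrow> subst N t M \<in> sclosure C"

end

theory Submission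
  imports Defs
begin

text \<open>
  Every class in the right-hand family is contained in the left-hand one,
  so it suffices to show that every one-input one-output tAND net N, with input
  transition a and output transition b, already lies in the closure of
  pAND, 11pOR and tOR.  If a = b, acyclicity forces N to be the single transition a,
  which is a tOR net.  Otherwise N arises by substitution: take the tOR "bridge"
  net  a \<rightarrow> p \<rightarrow> b  with a fresh place p (fresh names exist since the node type
  is infinite) and replace p by the interior of N, i.e. N with a and b removed,
  whose inputs are the places after a and whose outputs are the places before b.
  Acyclicity guarantees that a has no incoming and b no outgoing edges; from this
  the interior is again a (place-bordered) AND net and the substitution gives back
  exactly N.
\<close>

lemma sclosure_least:
  assumes "C \<subseteq> sclosure D"
  shows "sclosure C \<subseteq> sclosure D"
proof
  fix N assume "N \<in> sclosure C"
  then show "N \<in> sclosure D"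
    by induction (use assms in \<open>auto intro: sclosure.place sclosure.transition\<close>)
qed

definition avoiding :: "('a \<times> 'a) set \<Rightarrow> 'a set \<Rightarrow> ('a \<times> 'a) set" where
  "avoiding r S = {e \<in> r. fst e \<notin> S \<and> snd e \<notin> S}"

lemma converse_avoiding: "(avoiding r S)\<inverse> = avoiding (r\<inverse>) S"
  by (auto simp: avoiding_def)

lemma path_from_source:
  assumes no_in: "\<And>y. (y, a) \<notin> r" and no_out: "\<And>y. (b, y) \<notin> r"
    and path: "(a, x) \<in> r\<^sup>+" and "x \<noteq> b"
  shows "\<exists>i. (a, i) \<in> r \<and> (i, x) \<in> (avoiding r {a, b})\<^sup>*"
  using path \<open>x \<noteq> b\<close>
proof (induction rule: trancl_induct)
  case (base y)
  then show ?case by auto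
next
  case (step y x)
  have "y \<noteq> b" using step.hyps(2) no_out by auto
  then obtain i where i: "(a, i) \<in> r" "(i, y) \<in> (avoiding r {a, b})\<^sup>*"
    using step.IH by auto
  have "y \<noteq> a" using step.hyps(1) no_in by (auto dest: tranclD2)
  moreover have "x \<noteq> a" using step.hyps(2) no_in by auto
  ultimately have "(y, x) \<in> avoiding r {a, b}"
    using step.hyps(2) step.prems \<open>y \<noteq> b\<close> by (auto simp: avoiding_def)
  with i show ?case by (meson rtrancl.rtrancl_into_rtrancl)
qed

text \<open>The mirror image, obtained by reversing all edges.\<close>
lemma path_to_sink:
  assumes no_in: "\<And>y. (y, a) \<notin> r" and no_out: "\<And>y. (b, y) \<notin> r"
    and path: "(x, b) \<in> r\<^sup>+" and "x \<noteq> a"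
  shows "\<exists>q. (q, b) \<in> r \<and> (x, q) \<in> (avoiding r {a, b})\<^sup>*"
proof -
  have "(b, x) \<in> (r\<inverse>)\<^sup>+" using path by (simp add: trancl_converse)
  then obtain q where "(b, q) \<in> r\<inverse>" "(q, x) \<in> (avoiding (r\<inverse>) {b, a})\<^sup>*"
    using path_from_source[where r="r\<inverse>" and a=b and b=a and x=x] no_in no_out \<open>x \<noteq> a\<close> by auto
  then show ?thesis
    by (auto simp: insert_commute rtrancl_converse simp flip: converse_avoiding)
qed

definition bridge :: "'a \<Rightarrow> 'a \<Rightarrow> 'a \<Rightarrow> 'a wfn" where
  "bridge a p b = \<lparr>places = {p}, trans = {a, b}, flow = {(a, p), (p, b)},
                   inp = {a}, outp = {b}\<rparr>"

lemma bridge_tOR: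
  assumes "a \<noteq> b" "p \<noteq> a" "p \<noteq> b"
  shows "bridge a p b \<in> tOR"
proof -
  let ?X = "bridge a p b"
  have "petri_net ?X" using assms by (auto simp: bridge_def petri_net_def)
  moreover have "(a, b) \<in> (flow ?X)\<^sup>*"
    by (rule rtrancl_trans[of _ p]) (auto simp: bridge_def)
  moreover have "wf_conn ?X"
    using assms calculation(2) by (auto simp: bridge_def wf_conn_def nodes_def)
  moreover have "preset ?X a = {}" "postset ?X a = {p}" "preset ?X b = {p}" "postset ?X b = {}"
    using assms by (auto simp: bridge_def preset_def postset_def)
  ultimately show ?thesis using assms
    by (auto simp: tOR_def OR_net_def WF_def tWF_def bridge_def)
qed

definition interior :: "'a wfn \<Rightarrow> 'a \<Rightarrow> 'a \<Rightarrow> 'a wfn" where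
  "interior N a b = \<lparr>places = places N, trans = trans N - {a, b},
     flow = avoiding (flow N) {a, b}, inp = postset N a, outp = preset N b\<rparr>"

locale one_one_tAND =
  fixes N :: "'a wfn" and a b :: 'a
  assumes and_net: "AND_net N" and twf: "tWF N"
    and inp_eq: "inp N = {a}" and outp_eq: "outp N = {b}"
begin

lemma petri: "finite (places N)" "finite (trans N)" "places N \<inter> trans N = {}"
  and flow_sub: "flow N \<subseteq> (places N \<times> trans N) \<union> (trans N \<times> places N)"
  using twf by (auto simp: tWF_def petri_net_def)

lemma ends_trans: "a \<in> trans N" "b \<in> trans N" "a \<notin> places N" "b \<notin> places N"
  using twf inp_eq outp_eq petri(3) by (auto simp: tWF_def)

lemma from_a: "x \<in> nodes N \<Longrightarrow> (a, x) \<in> (flow N)\<^sup>*"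
  and to_b: "x \<in> nodes N \<Longrightarrow> (x, b) \<in> (flow N)\<^sup>*"
  using twf inp_eq outp_eq by (auto simp: tWF_def wf_conn_def)

lemma acyclic_flow: "acyclic (flow N)"
  using and_net by (simp add: AND_net_def)

lemma flow_nodes: "(u, v) \<in> flow N \<Longrightarrow> u \<in> nodes N \<and> v \<in> nodes N"
  using flow_sub by (auto simp: nodes_def)

text \<open>Since everything is reachable from a, an edge into a would close a cycle;
  dually for b.\<close>
lemma no_flow_into_a: "(y, a) \<notin> flow N"
proof
  assume e: "(y, a) \<in> flow N"
  then have "(a, y) \<in> (flow N)\<^sup>*" using from_a flow_nodes by blast
  with e have "(y, y) \<in> (flow N)\<^sup>+" by (meson rtrancl_into_trancl2)
  with acyclic_flow show False by (auto simp: acyclic_def)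
qed

lemma no_flow_out_of_b: "(b, y) \<notin> flow N"
proof
  assume e: "(b, y) \<in> flow N"
  then have "(y, b) \<in> (flow N)\<^sup>*" using to_b flow_nodes by blast
  with e have "(b, b) \<in> (flow N)\<^sup>+" by (meson rtrancl_into_trancl1 rtrancl_into_trancl2)
  with acyclic_flow show False by (auto simp: acyclic_def)
qed

lemma trivial_tOR:
  assumes "a = b"
  shows "N \<in> tOR"
proof -
  have "nodes N \<subseteq> {a}"
  proof
    fix x assume x: "x \<in> nodes N"
    show "x \<in> {a}"
    proof (rule ccontr)
      assume "x \<notin> {a}"
      then have "(a, x) \<in> (flow N)\<^sup>+" "(x, a) \<in> (flow N)\<^sup>+"
        using from_a[OF x] to_b[OF x] assms by (auto dest: rtranclD)
      then have "(a, a) \<in> (flow N)\<^sup>+" by auto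
      with acyclic_flow show False by (auto simp: acyclic_def)
    qed
  qed
  then have "places N = {}" "trans N = {a}"
    using ends_trans by (auto simp: nodes_def)
  then have "flow N = {}" using flow_sub by auto
  with \<open>trans N = {a}\<close> show ?thesis
    using twf inp_eq outp_eq assms
    by (auto simp: tOR_def OR_net_def WF_def preset_def postset_def)
qed

context
  assumes distinct_ends: "a \<noteq> b"
begin

abbreviation M where "M \<equiv> interior N a b"

lemma nodes_interior: "nodes M = nodes N - {a, b}"
  using ends_trans by (auto simp: interior_def nodes_def)

lemma interior_pWF: "pWF M"
proof -
  have ab: "(a, b) \<in> (flow N)\<^sup>+"
    using from_a[of b] ends_trans distinct_ends by (auto simp: nodes_def dest: rtranclD)
  have "petri_net M" using petri flow_sub by (auto simp: interior_def petri_net_def avoiding_def)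
  moreover have "inp M \<noteq> {}" using ab by (auto simp: interior_def postset_def dest: tranclD)
  moreover have "outp M \<noteq> {}" using ab by (auto simp: interior_def preset_def dest: tranclD2)
  moreover have "inp M \<subseteq> places M" "outp M \<subseteq> places M"
    using flow_sub ends_trans by (auto simp: interior_def postset_def preset_def)
  moreover have "wf_conn M"
    unfolding wf_conn_def
  proof (intro conjI ballI)
    fix x assume "x \<in> nodes M"
    then have x: "x \<in> nodes N" "x \<noteq> a" "x \<noteq> b" using nodes_interior by auto
    have "(a, x) \<in> (flow N)\<^sup>+" using from_a[OF x(1)] x(2) by (auto dest: rtranclD)
    then show "\<exists>i\<in>inp M. (i, x) \<in> (flow M)\<^sup>*"
      using path_from_source[OF no_flow_into_a no_flow_out_of_b] x(3)
      by (auto simp: interior_def postset_def)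
    have "(x, b) \<in> (flow N)\<^sup>+" using to_b[OF x(1)] x(3) by (auto dest: rtranclD)
    then show "\<exists>q\<in>outp M. (x, q) \<in> (flow M)\<^sup>*"
      using path_to_sink[OF no_flow_into_a no_flow_out_of_b] x(2)
      by (auto simp: interior_def preset_def)
  qed
  ultimately show ?thesis by (simp add: pWF_def)
qed

text \<open>Each place keeps its unique neighbours, except that a neighbour a or b is
  dropped exactly when the place becomes an input or output of the interior.\<close>
lemma interior_pAND: "M \<in> pAND"
proof -
  have "AND_net M"
    unfolding AND_net_def
  proof (intro conjI ballI)
    show "WF M" using interior_pWF by (simp add: WF_def)
    show "acyclic (flow M)"
      using acyclic_flow by (rule acyclic_subset) (auto simp: interior_def avoiding_def)
  next
    fix q assume "q \<in> places M"
    then have q: "q \<in> places N" "q \<noteq> a" "q \<noteq> b"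
      using ends_trans by (auto simp: interior_def)
    have "card (preset N q) = 1" "card (postset N q) = 1"
      using and_net q inp_eq outp_eq by (auto simp: AND_net_def)
    then obtain u v where u: "preset N q = {u}" and v: "postset N q = {v}"
      by (meson card_1_singletonE)
    have "u \<noteq> b" using u no_flow_out_of_b by (auto simp: preset_def)
    have "v \<noteq> a" using v no_flow_into_a by (auto simp: postset_def)
    have pre: "preset M q = preset N q - {a, b}" and post: "postset M q = postset N q - {a, b}"
      using q by (auto simp: preset_def postset_def interior_def avoiding_def)
    have inM: "q \<in> inp M \<longleftrightarrow> u = a" and outM: "q \<in> outp M \<longleftrightarrow> v = b"
      using u v by (auto simp: interior_def postset_def preset_def)
    show "q \<in> inp M \<and> card (preset M q) = 0 \<or> q \<notin> inp M \<and> card (preset M q) = 1"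
      using pre u \<open>u \<noteq> b\<close> inM by auto
    show "q \<in> outp M \<and> card (postset M q) = 0 \<or> q \<notin> outp M \<and> card (postset M q) = 1"
      using post v \<open>v \<noteq> a\<close> outM by auto
  qed
  then show ?thesis using interior_pWF by (simp add: pAND_def)
qed

text \<open>Substituting the interior into the bridge through a fresh place restores N:
  the edges a \<rightarrow> i and q \<rightarrow> b are recreated by the substitution, and no other edges
  of N touch a or b.\<close>
lemma subst_bridge_interior:
  assumes fresh: "p \<notin> nodes N"
  shows "subst (bridge a p b) p M = N"
proof (rule wfn.equality)
  have p: "p \<noteq> a" "p \<noteq> b" using fresh ends_trans by (auto simp: nodes_def)
  have pX: "preset (bridge a p b) p = {a}" "postset (bridge a p b) p = {b}"
    using p by (auto simp: bridge_def preset_def postset_def)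
  show "places (subst (bridge a p b) p M) = places N"
    by (simp add: subst_def bridge_def interior_def)
  show "trans (subst (bridge a p b) p M) = trans N"
    using ends_trans p by (auto simp: subst_def bridge_def interior_def)
  show "inp (subst (bridge a p b) p M) = inp N" using p inp_eq by (simp add: subst_def bridge_def)
  show "outp (subst (bridge a p b) p M) = outp N" using p outp_eq by (simp add: subst_def bridge_def)
  show "wfn.more (subst (bridge a p b) p M) = wfn.more N" by (simp add: subst_def)
  show "flow (subst (bridge a p b) p M) = flow N"
  proof
    show "flow (subst (bridge a p b) p M) \<subseteq> flow N"
      using pX by (auto simp: subst_def interior_def bridge_def avoiding_def postset_def preset_def)
    show "flow N \<subseteq> flow (subst (bridge a p b) p M)"
    proof
      fix e assume "e \<in> flow N"
      moreover obtain u v where "e = (u, v)" by force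
      ultimately show "e \<in> flow (subst (bridge a p b) p M)"
        using pX no_flow_into_a no_flow_out_of_b
        by (auto simp: subst_def interior_def avoiding_def postset_def preset_def)
    qed
  qed
qed

end

end

lemma tAND11_in_sclosure:
  assumes inf: "infinite (UNIV :: 'a set)" and N: "(N :: 'a wfn) \<in> tAND11"
  shows "N \<in> sclosure (pAND \<union> pOR11 \<union> tOR)"
proof -
  have "card (inp N) = 1" "card (outp N) = 1" using N by (auto simp: tAND11_def)
  then obtain a b where "inp N = {a}" "outp N = {b}" by (meson card_1_singletonE)
  then interpret one_one_tAND N a b
    using N by unfold_locales (auto simp: tAND11_def)
  show ?thesis
  proof (cases "a = b")
    case True
    then show ?thesis using trivial_tOR by (auto intro: sclosure.base)
  next
    case False
    have "finite (nodes N)" using petri by (simp add: nodes_def)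
    then obtain p where fresh: "p \<notin> nodes N" using inf ex_new_if_finite by blast
    then have p: "p \<noteq> a" "p \<noteq> b" using ends_trans by (auto simp: nodes_def)
    have "nodes (bridge a p b) \<inter> nodes (interior N a b) = {}"
      using nodes_interior[OF False] fresh by (auto simp: bridge_def nodes_def)
    then have "subst (bridge a p b) p (interior N a b) \<in> sclosure (pAND \<union> pOR11 \<union> tOR)"
      using bridge_tOR[OF False p] interior_pAND[OF False] interior_pWF[OF False]
      by (intro sclosure.place) (auto intro: sclosure.base simp: bridge_def)
    then show ?thesis using subst_bridge_interior[OF False fresh] by simp
  qed
qed

theorem mainTheorem2:
  assumes "infinite (UNIV :: 'a set)"
  shows "sclosure (pAND \<union> tAND11 \<union> pOR11 \<union> (tOR :: 'a wfn set))
       = sclosure (pAND \<union> pOR11 \<union> tOR)"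
proof
  show "sclosure (pAND \<union> tAND11 \<union> pOR11 \<union> (tOR :: 'a wfn set)) \<subseteq> sclosure (pAND \<union> pOR11 \<union> tOR)"
    by (rule sclosure_least) (use tAND11_in_sclosure[OF assms] in \<open>auto intro: sclosure.base\<close>)
  show "sclosure (pAND \<union> pOR11 \<union> (tOR :: 'a wfn set)) \<subseteq> sclosure (pAND \<union> tAND11 \<union> pOR11 \<union> tOR)"
    by (rule sclosure_least) (auto intro: sclosure.base)
qed

end
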